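(* Let $A$ be a finite multiset of $n$ points in $\mathbb{R}^d$ with mean $\mu$, let $\varepsilon,\delta\in(0,1)$, $b>0$, $k=b\log\delta^{-1}$ and $r=\frac{1}{11}\sqrt{\frac{\varepsilon\,\mathrm{Opt}}{n}}$. Let $\hat\mu_1,\dots,\hat\mu_k\in\mathbb{R}^d$ be points such that at least $\frac{7}{10}b\log\delta^{-1}$ indices $i$ satisfy $\|\hat\mu_i-\mu\|\le r$. Let $m$ be the coordinate-wise median of $\hat\mu_1,\dots,\hat\mu_k$. Then $\|m-\mu\|\le b\log\delta^{-1}\cdot r$.
   Context: $\mu=\frac1n\sum_{p\in A}p$, $\mathrm{Opt}=\sum_{p\in A}\|p-\mu\|^2$. The coordinate-wise median $m$ is the point whose $l$-th coordinate, for each $l\in\{1,\dots,d\}$, is a median of the multiset $\{(\hat\mu_1)_l,\dots,(\hat\mu_k)_l\}$ (chosen among these values). *)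

theory Defs
  imports "HOL-Analysis.Analysis" "HOL-Library.Multiset"
begin

definition mset_mean :: "(real^'d) multiset \<Rightarrow> real^'d" where
  "mset_mean A = (1 / real (size A)) *\<^sub>R sum_mset A"

definition mset_opt :: "(real^'d) multiset \<Rightarrow> real" where
  "mset_opt A = sum_mset (image_mset (\<lambda>p. (norm (p - mset_mean A))\<^sup>2) A)"

definition is_median_of :: "nat \<Rightarrow> (nat \<Rightarrow> real) \<Rightarrow> real \<Rightarrow> bool" where
  "is_median_of k x v \<longleftrightarrow> v \<in> x ` {..<k}
     \<and> real (card {i\<in>{..<k}. x i \<le> v}) \<ge> real k / 2
     \<and> real (card {i\<in>{..<k}. x i \<ge> v}) \<ge> real k / 2"

definition is_coordinatewise_median :: "nat \<Rightarrow> (nat \<Rightarrow> real^'d) \<Rightarrow> real^'d \<Rightarrow> bool" where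
  "is_coordinatewise_median k mu m \<longleftrightarrow> (\<forall>l. is_median_of k (\<lambda>i. mu i $ l) (m $ l))"

end

theory Submission
  imports Defs
begin

text \<open>More than half of the estimates are good, i.e. within distance r of the mean. Since at least
  half of the estimates lie on either side of the median in every coordinate, each side contains
  a good estimate, so in every coordinate the median is no farther from the mean than some good
  estimate. Summing over coordinates bounds the squared distance of the median from the mean by
  the sum of the squared distances of the good estimates, hence by g r^2 where g is their number;
  finally sqrt g is at most k.\<close>

lemma Int_nonempty_if_card_sum_gt:
  assumes "finite U" "S \<subseteq> U" "T \<subseteq> U" "card U < card S + card T"
  shows "S \<inter> T \<noteq> {}"
proof
  assume "S \<inter> T = {}"
  then have "card S + card T = card (S \<union> T)"
    using assms(1-3) by (simp add: card_Un_disjoint finite_subset)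
  also have "\<dots> \<le> card U"
    using assms(1-3) by (simp add: card_mono)
  finally show False
    using assms(4) by simp
qed

lemma median_dist_le_majority_member:
  assumes "is_median_of k x v" "G \<subseteq> {..<k}" "real k / 2 < real (card G)"
  shows "\<exists>i\<in>G. \<bar>v - c\<bar> \<le> \<bar>x i - c\<bar>"
proof -
  have majority_meets: "\<exists>i\<in>G. P i"
    if "real k / 2 \<le> real (card {i\<in>{..<k}. P i})" for P
  proof -
    have "{i\<in>{..<k}. P i} \<inter> G \<noteq> {}"
      using assms(2,3) that by (intro Int_nonempty_if_card_sum_gt[of "{..<k}"]) auto
    then show ?thesis by blast
  qed
  obtain i j where "i \<in> G" "x i \<le> v" "j \<in> G" "v \<le> x j"
    using majority_meets[of "\<lambda>i. x i \<le> v"] majority_meets[of "\<lambda>i. v \<le> x i"] assms(1)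
    unfolding is_median_of_def by blast
  then show ?thesis
    by (cases "c \<le> v") force+
qed

lemma power2_norm_vec: "(norm (x :: real^'d))\<^sup>2 = (\<Sum>l\<in>UNIV. (x $ l)\<^sup>2)"
  unfolding norm_vec_def L2_set_def by (simp add: sum_nonneg)

lemma power2_norm_le_sum_if_coordinatewise_dominated:
  fixes y :: "real^'d" and x :: "'i \<Rightarrow> real^'d"
  assumes "finite G" "\<And>l. \<exists>i\<in>G. \<bar>y $ l\<bar> \<le> \<bar>x i $ l\<bar>"
  shows "(norm y)\<^sup>2 \<le> (\<Sum>i\<in>G. (norm (x i))\<^sup>2)"
proof -
  have coordinate: "(y $ l)\<^sup>2 \<le> (\<Sum>i\<in>G. (x i $ l)\<^sup>2)" for l
  proof -
    obtain i where "i \<in> G" "\<bar>y $ l\<bar> \<le> \<bar>x i $ l\<bar>"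
      using assms(2) by blast
    then have "(y $ l)\<^sup>2 \<le> (x i $ l)\<^sup>2"
      by (simp add: abs_le_square_iff)
    also have "\<dots> \<le> (\<Sum>i\<in>G. (x i $ l)\<^sup>2)"
      using assms(1) \<open>i \<in> G\<close> by (intro member_le_sum) auto
    finally show ?thesis .
  qed
  have "(norm y)\<^sup>2 \<le> (\<Sum>l\<in>UNIV. \<Sum>i\<in>G. (x i $ l)\<^sup>2)"
    unfolding power2_norm_vec by (intro sum_mono coordinate)
  also have "\<dots> = (\<Sum>i\<in>G. (norm (x i))\<^sup>2)"
    by (subst sum.swap) (simp add: power2_norm_vec)
  finally show ?thesis .
qed

lemma real_sqrt_of_nat_le:
  assumes "j \<le> k"
  shows "sqrt (real j) \<le> real k"
proof (rule real_le_lsqrt)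
  have "j \<le> k * k"
    using assms le_square order_trans by blast
  then show "real j \<le> (real k)\<^sup>2"
    by (simp add: power2_eq_square flip: of_nat_mult)
qed simp

lemma coordinatewise_median_dist_le:
  fixes x :: "nat \<Rightarrow> real^'d"
  assumes "is_coordinatewise_median k x m" "G \<subseteq> {..<k}" "real k / 2 < real (card G)"
    and "\<And>i. i \<in> G \<Longrightarrow> norm (x i - c) \<le> r"
  shows "norm (m - c) \<le> sqrt (real (card G)) * r"
proof -
  have "finite G"
    using assms(2) finite_subset by blast
  have "(norm (m - c))\<^sup>2 \<le> (\<Sum>i\<in>G. (norm (x i - c))\<^sup>2)"
  proof (rule power2_norm_le_sum_if_coordinatewise_dominated[OF \<open>finite G\<close>])
    fix l
    show "\<exists>i\<in>G. \<bar>(m - c) $ l\<bar> \<le> \<bar>(x i - c) $ l\<bar>"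
      using median_dist_le_majority_member[OF _ assms(2,3)] assms(1)
      unfolding is_coordinatewise_median_def by simp
  qed
  also have "\<dots> \<le> (\<Sum>i\<in>G. r\<^sup>2)"
    using assms(4) by (intro sum_mono power_mono) auto
  also have "\<dots> = (sqrt (real (card G)) * r)\<^sup>2"
    by (simp add: power_mult_distrib)
  finally have squared: "(norm (m - c))\<^sup>2 \<le> (sqrt (real (card G)) * r)\<^sup>2" .
  have "G \<noteq> {}"
    using assms(3) by (cases "G = {}") simp_all
  then obtain i where "i \<in> G"
    by blast
  then have "0 \<le> r"
    using assms(4) norm_ge_zero order_trans by blast
  then show ?thesis
    using power2_le_imp_le[OF squared] by simp
qed

lemma mset_opt_nonneg: "mset_opt A \<ge> 0"
proof -
  have "sum_mset (image_mset (\<lambda>_. 0) A) \<le> mset_opt A"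
    unfolding mset_opt_def by (rule sum_mset_mono) simp
  then show ?thesis by simp
qed

theorem lemma3p5:
  fixes A :: "(real^'d) multiset" and n k :: nat and eps delta b r :: real
    and muhat :: "nat \<Rightarrow> real^'d" and m :: "real^'d"
  assumes "size A = n" and "n > 0"
    and "0 < eps" "eps < 1" "0 < delta" "delta < 1" "b > 0"
    and "real k = b * ln (1 / delta)"
    and "r = (1/11) * sqrt (eps * mset_opt A / real n)"
    and "real (card {i\<in>{..<k}. norm (muhat i - mset_mean A) \<le> r}) \<ge> 7/10 * b * ln (1 / delta)"
    and "is_coordinatewise_median k muhat m"
  shows "norm (m - mset_mean A) \<le> b * ln (1 / delta) * r"
proof -
  define G where "G = {i\<in>{..<k}. norm (muhat i - mset_mean A) \<le> r}"
  have "real k > 0"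
    using assms(5-8) by simp
  then have "real k / 2 < real (card G)"
    using assms(8,10) unfolding G_def by linarith
  then have "norm (m - mset_mean A) \<le> sqrt (real (card G)) * r"
    using assms(11) unfolding G_def by (intro coordinatewise_median_dist_le) auto
  also have "\<dots> \<le> real k * r"
  proof (intro mult_right_mono real_sqrt_of_nat_le)
    show "card G \<le> k"
      using card_mono[of "{..<k}" G] unfolding G_def by auto
    show "0 \<le> r"
      unfolding assms(9) using assms(3) mset_opt_nonneg[of A]
      by (intro mult_nonneg_nonneg real_sqrt_ge_zero divide_nonneg_nonneg) auto
  qed
  finally show ?thesis
    using assms(8) by simp
qed

end
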